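(* (1) For every permutation $w\in S_k$ there is a sequence $\mathbf b=(b_1,\dots,b_{k-1})$ of non-negative integers with $\sum_i b_i=\ell(w)$ such that the coefficient of $v^{\mathbf b}$ in $R_w$ is non-zero. (2) For every matching sequence $\mathbf b=(b_1,\dots,b_{k-1})$ there is a permutation $w\in S_k$ with $\ell(w)=\sum_i b_i$ such that the coefficient of $v^{\mathbf b}$ in $R_w$ is non-zero.
   Context: Fix $k\ge 2$. Permutations $u\in S_k$ are written in one-line notation $u=(u(1),\dots,u(k))$. An inversion of $u$ is a pair of positions $(i,j)$ with $i<j$ and $u(i)>u(j)$; $\ell(u)$ is the number of inversions. For $1\le n<m\le k$ let $u\circ(n\,m)$ denote the permutation obtained from $u$ by swapping the entries in positions $n$ and $m$. We say $u'$ covers $u$ if $u'=u\circ(n\,m)$ for some $n<m$ and $\ell(u')=\ell(u)+1$; the weight of this cover is $v_n+v_{n+1}+\dots+v_{m-1}$. For $w\in S_k$, $R_w\in\mathbb Z[v_1,\dots,v_{k-1}]$ is the sum, over all chains $\mathrm{id}=u_0,u_1,\dots,u_{\ell(w)}=w$ in which each $u_{i+1}$ covers $u_i$, of the product of the weights of the covers $u_i\to u_{i+1}$. $v^{\mathbf b}=v_1^{b_1}\cdots v_{k-1}^{b_{k-1}}$. The bipartite graph $\mathcal B_{\mathbf b}$ has upper vertex class $U=\{(j,l):1\le j\le l\le k-1\}$ and lower vertex class $D_{\mathbf b}=\{(i,t):1\le i\le k-1,\ 1\le t\le b_i\}$, with an edge between $(j,l)\in U$ and $(i,t)\in D_{\mathbf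 b}$ if and only if $j\le i\le l$; $\mathbf b$ is a matching sequence if $\mathcal B_{\mathbf b}$ has a matching covering all of $D_{\mathbf b}$. *)

theory Defs
  imports Main "HOL-Library.Poly_Mapping" "HOL-Combinatorics.Transposition" "HOL-Combinatorics.Permutations"
begin

text \<open>Permutations of S_k are functions u :: nat => nat with u permutes {1..k};
  the one-line notation is (u 1, ..., u k).\<close>

definition inv_len :: "nat \<Rightarrow> (nat \<Rightarrow> nat) \<Rightarrow> nat" where
  "inv_len k u = card {(i, j). 1 \<le> i \<and> i < j \<and> j \<le> k \<and> u i > u j}"

definition swap_pos :: "(nat \<Rightarrow> nat) \<Rightarrow> nat \<Rightarrow> nat \<Rightarrow> (nat \<Rightarrow> nat)" where
  "swap_pos u n m = u \<circ> Transposition.transpose n m"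

text \<open>Polynomials in Z[v_1,...,v_{k-1}]: finitely supported maps from exponent
  vectors (nat =>0 nat) to int coefficients; v_i is the monomial with exponent 1 at i.\<close>
type_synonym poly_v = "(nat \<Rightarrow>\<^sub>0 nat) \<Rightarrow>\<^sub>0 int"

definition var_v :: "nat \<Rightarrow> poly_v" where
  "var_v i = Poly_Mapping.single (Poly_Mapping.single i 1) 1"

definition cover_weight :: "nat \<times> nat \<Rightarrow> poly_v" where
  "cover_weight p = (\<Sum>i\<in>{fst p..<snd p}. var_v i)"

text \<open>A chain id = u_0, ..., u_r is encoded by the list of transposition positions
  (n_1,m_1), ..., (n_r,m_r) with n_j < m_j and u_j = u_{j-1} o (n_j m_j);
  the pair (n,m) is uniquely determined by (u_{j-1}, u_j).\<close>
definition chain_step :: "(nat \<times> nat) list \<Rightarrow> nat \<Rightarrow> (nat \<Rightarrow> nat)" where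
  "chain_step ps j = foldl (\<lambda>u p. swap_pos u (fst p) (snd p)) id (take j ps)"

definition chains :: "nat \<Rightarrow> (nat \<Rightarrow> nat) \<Rightarrow> (nat \<times> nat) list set" where
  "chains k w = {ps. length ps = inv_len k w
      \<and> set ps \<subseteq> {(n, m). 1 \<le> n \<and> n < m \<and> m \<le> k}
      \<and> (\<forall>j < length ps. inv_len k (chain_step ps (Suc j)) = inv_len k (chain_step ps j) + 1)
      \<and> chain_step ps (length ps) = w}"

definition R_poly :: "nat \<Rightarrow> (nat \<Rightarrow> nat) \<Rightarrow> poly_v" where
  "R_poly k w = (\<Sum>ps\<in>chains k w. prod_list (map cover_weight ps))"

definition coeff_v :: "poly_v \<Rightarrow> (nat \<Rightarrow>\<^sub>0 nat) \<Rightarrow> int" where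
  "coeff_v P b = Poly_Mapping.lookup P b"

definition exp_seq :: "nat \<Rightarrow> (nat \<Rightarrow>\<^sub>0 nat) \<Rightarrow> bool" where
  "exp_seq k b \<longleftrightarrow> Poly_Mapping.keys b \<subseteq> {1..k-1}"

definition upper_B :: "nat \<Rightarrow> (nat \<times> nat) set" where
  "upper_B k = {(j, l). 1 \<le> j \<and> j \<le> l \<and> l \<le> k - 1}"

definition lower_B :: "nat \<Rightarrow> (nat \<Rightarrow>\<^sub>0 nat) \<Rightarrow> (nat \<times> nat) set" where
  "lower_B k b = {(i, t). 1 \<le> i \<and> i \<le> k - 1 \<and> 1 \<le> t \<and> t \<le> Poly_Mapping.lookup b i}"

definition matching_seq :: "nat \<Rightarrow> (nat \<Rightarrow>\<^sub>0 nat) \<Rightarrow> bool" where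
  "matching_seq k b \<longleftrightarrow> (\<exists>f. inj_on f (lower_B k b) \<and> f ` lower_B k b \<subseteq> upper_B k
      \<and> (\<forall>d\<in>lower_B k b. fst (f d) \<le> fst d \<and> fst d \<le> snd (f d)))"

end

theory Submission
  imports Defs
begin

(*
  Every chain contributes a product of cover weights, and these have nonnegative coefficients,
  so a single chain certifies a monomial of R_w. Sorting w by transpositions of adjacent values
  gives a chain whose covers are exactly the inversions (i, j) of w; picking from each cover
  weight v_i + ... + v_(j-1) one variable v_s with i <= s < j gives a monomial of R_w of degree
  l(w). For (1) pick s = i. For (2) take a matching of D_b of least total interval length: the
  set S of intervals [j, l] it uses is split-closed (if [a, l] is used then, for a <= m < l,
  so is [a, m] or [m + 1, l]). By induction on the number of letters, appending one entry at a
  time, such an S is realized by a permutation whose inversions (i', j') correspond bijectively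
  to the intervals [j, l] in S with i' <= j and l < j'. Labelling each inversion by the row of
  the lower vertex matched to its interval produces exactly v^b.
*)

section \<open>Products of cover weights\<close>

lemma lookup_single_one_mult:
  fixes Q :: poly_v
  shows "Poly_Mapping.lookup (Poly_Mapping.single m 1 * Q) j = (\<Sum>q. Poly_Mapping.lookup Q q when j = m + q)"
proof -
  have "Poly_Mapping.lookup (Poly_Mapping.single m 1 * Q) j
      = (\<Sum>l. (1 when m = l) * (\<Sum>q. Poly_Mapping.lookup Q q when j = l + q))"
    by (simp add: lookup_mult lookup_single, intro Sum_any.cong) (auto simp: when_def)
  also have "\<dots> = (\<Sum>l. (\<Sum>q. Poly_Mapping.lookup Q q when j = l + q) when l = m)"
    by (intro Sum_any.cong) (auto simp: when_def)
  finally show ?thesis by simp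
qed

lemma lookup_single_one_mult_add:
  fixes Q :: poly_v
  shows "Poly_Mapping.lookup (Poly_Mapping.single m 1 * Q) (m + j) = Poly_Mapping.lookup Q j"
proof -
  have "(\<Sum>q. Poly_Mapping.lookup Q q when m + j = m + q) = (\<Sum>q. Poly_Mapping.lookup Q q when q = j)"
    by (intro Sum_any.cong) (auto simp: when_def)
  then show ?thesis by (simp add: lookup_single_one_mult)
qed

definition nonneg_coeffs :: "poly_v \<Rightarrow> bool" where
  "nonneg_coeffs Q \<longleftrightarrow> (\<forall>j. Poly_Mapping.lookup Q j \<ge> 0)"

lemma nonneg_coeffs_single_one_mult:
  assumes "nonneg_coeffs Q"
  shows "nonneg_coeffs (Poly_Mapping.single m 1 * Q)"
  unfolding nonneg_coeffs_def
proof
  fix j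
  show "Poly_Mapping.lookup (Poly_Mapping.single m 1 * Q) j \<ge> 0"
  proof (cases "\<exists>q. j = m + q")
    case True
    then show ?thesis using assms by (auto simp: lookup_single_one_mult_add nonneg_coeffs_def)
  next
    case False
    then have "(\<Sum>q. Poly_Mapping.lookup Q q when j = m + q) = 0"
      by (simp add: when_def)
    then show ?thesis by (simp add: lookup_single_one_mult)
  qed
qed

lemma nonneg_coeffs_cover_weight_mult:
  assumes "nonneg_coeffs Q"
  shows "nonneg_coeffs (cover_weight p * Q)"
  using nonneg_coeffs_single_one_mult[OF assms]
  unfolding nonneg_coeffs_def cover_weight_def var_v_def
  by (auto simp: sum_distrib_right lookup_sum intro!: sum_nonneg)

lemma lookup_cover_weight_mult_ge:
  assumes "nonneg_coeffs Q" "fst p \<le> i" "i < snd p"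
  shows "Poly_Mapping.lookup (cover_weight p * Q) (Poly_Mapping.single i 1 + m) \<ge> Poly_Mapping.lookup Q m"
proof -
  have "Poly_Mapping.lookup Q m
      = Poly_Mapping.lookup (var_v i * Q) (Poly_Mapping.single i 1 + m)"
    by (simp add: var_v_def lookup_single_one_mult_add)
  also have "\<dots> \<le> (\<Sum>i'\<in>{fst p..<snd p}. Poly_Mapping.lookup (var_v i' * Q) (Poly_Mapping.single i 1 + m))"
    using assms nonneg_coeffs_single_one_mult
    by (intro member_le_sum) (auto simp: nonneg_coeffs_def var_v_def)
  also have "\<dots> = Poly_Mapping.lookup (cover_weight p * Q) (Poly_Mapping.single i 1 + m)"
    by (simp add: cover_weight_def sum_distrib_right lookup_sum)
  finally show ?thesis .
qed

lemma nonneg_coeffs_prod_cover_weights: "nonneg_coeffs (prod_list (map cover_weight ps))"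
  by (induction ps) (auto simp: nonneg_coeffs_def lookup_one when_def
      intro: nonneg_coeffs_cover_weight_mult[unfolded nonneg_coeffs_def, rule_format])

lemma lookup_prod_cover_weights_ge_one:
  assumes "\<forall>p\<in>set ps. fst p \<le> \<sigma> p \<and> \<sigma> p < snd p"
  shows "Poly_Mapping.lookup (prod_list (map cover_weight ps))
           (\<Sum>p\<leftarrow>ps. Poly_Mapping.single (\<sigma> p) 1) \<ge> 1"
  using assms
proof (induction ps)
  case Nil
  then show ?case by (simp add: lookup_one)
next
  case (Cons p ps)
  then show ?case
    using lookup_cover_weight_mult_ge[OF nonneg_coeffs_prod_cover_weights, of p "\<sigma> p"]
    by (simp del: One_nat_def) (meson order_trans)
qed

section \<open>A chain through the inversions\<close>

definition inversions :: "nat \<Rightarrow> (nat \<Rightarrow> nat) \<Rightarrow> (nat \<times> nat) set" where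
  "inversions k u = {(i, j). 1 \<le> i \<and> i < j \<and> j \<le> k \<and> u i > u j}"

lemma inv_len_eq_card_inversions: "inv_len k u = card (inversions k u)"
  unfolding inv_len_def inversions_def by simp

lemma finite_inversions: "finite (inversions k u)"
  by (rule finite_subset[of _ "{1..k} \<times> {1..k}"]) (auto simp: inversions_def)

lemma inversions_swap_pos_adjacent_values:
  assumes w: "w permutes {1..k}" and st: "(s, t) \<in> inversions k w" and adj: "w s = Suc (w t)"
  shows "inversions k w = insert (s, t) (inversions k (swap_pos w s t))"
    and "(s, t) \<notin> inversions k (swap_pos w s t)"
proof -
  obtain v where v: "w t = v" "w s = Suc v" using adj by simp
  have st': "1 \<le> s" "s < t" "t \<le> k" using st by (auto simp: inversions_def)
  have ne: "w i \<noteq> Suc v \<and> w i \<noteq> v" if "i \<noteq> s" "i \<noteq> t" for i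
    using permutes_inj[OF w] that v by (metis injD)
  have sw: "swap_pos w s t i = (if i = s then v else if i = t then Suc v else w i)" for i
    using v by (auto simp: swap_pos_def Transposition.transpose_def)
  show "inversions k w = insert (s, t) (inversions k (swap_pos w s t))"
  proof (rule set_eqI, clarify)
    fix i j
    show "(i, j) \<in> inversions k w \<longleftrightarrow> (i, j) \<in> insert (s, t) (inversions k (swap_pos w s t))"
      using ne[of i] ne[of j] st' v unfolding inversions_def sw
      by (cases "i = s"; cases "i = t"; cases "j = s"; cases "j = t") auto
  qed
  show "(s, t) \<notin> inversions k (swap_pos w s t)"
    unfolding inversions_def sw by auto
qed

text \<open>Follow the position \<open>q\<close> of the value \<open>w c + 1\<close>: either \<open>q < c\<close>, or \<open>(a, q)\<close> is an
  inversion with a smaller gap of values.\<close>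
lemma adjacent_values_inversion_exists:
  assumes w: "w permutes {1..k}" and "(a, c) \<in> inversions k w"
  shows "\<exists>s t. (s, t) \<in> inversions k w \<and> w s = Suc (w t)"
  using assms(2)
proof (induction "w a - w c" arbitrary: c rule: less_induct)
  case less
  have ac: "1 \<le> a" "a < c" "c \<le> k" "w c < w a" using less.prems by (auto simp: inversions_def)
  then have "w a \<in> {1..k}" using permutes_in_image[OF w, of a] by simp
  then have "Suc (w c) \<in> w ` {1..k}" unfolding permutes_image[OF w] using ac by simp
  then obtain q where q: "q \<in> {1..k}" "w q = Suc (w c)" by (metis imageE)
  show ?case
  proof (cases "q < c")
    case True
    then have "(q, c) \<in> inversions k w" using q ac by (auto simp: inversions_def)
    then show ?thesis using q(2) by blast
  next
    case False
    have "q \<noteq> c" using q(2) by auto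
    then have "c < q" using False by simp
    then have "q \<noteq> a" using ac by simp
    then have "w q \<noteq> w a" using permutes_inj[OF w] by (simp add: inj_eq)
    then have "(a, q) \<in> inversions k w" "w a - w q < w a - w c"
      using q ac \<open>c < q\<close> by (auto simp: inversions_def)
    then show ?thesis using less.hyps by blast
  qed
qed

lemma permutes_without_inversions_eq_id:
  assumes w: "w permutes {1..k}" and no_inv: "inversions k w = {}"
  shows "w = id"
proof (rule ccontr)
  assume "w \<noteq> id"
  then have ex: "\<exists>t. w t \<noteq> t" by auto
  define t where "t = (LEAST t. w t \<noteq> t)"
  have wt: "w t \<noteq> t" unfolding t_def using ex by (rule LeastI_ex)
  have below: "w s = s" if "s < t" for s
    using not_less_Least[of s "\<lambda>t. w t \<noteq> t"] that t_def by auto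
  have t_in: "t \<in> {1..k}" using wt w by (meson permutes_not_in)
  have "\<not> w t < t"
    using below wt permutes_inj[OF w] by (metis injD)
  then have gt: "t < w t" using wt by auto
  obtain q where q: "q \<in> {1..k}" "w q = t"
    using t_in permutes_image[OF w] by (metis imageE)
  have "t < q" using below q wt gt by (metis linorder_neqE_nat less_irrefl)
  then have "(t, q) \<in> inversions k w" using q t_in gt by (auto simp: inversions_def)
  then show False using no_inv by auto
qed

lemma chain_step_append:
  "j \<le> length ps \<Longrightarrow> chain_step (ps @ qs) j = chain_step ps j"
  by (simp add: chain_step_def)

lemma chain_step_snoc_length:
  "chain_step (ps @ [p]) (Suc (length ps)) = swap_pos (chain_step ps (length ps)) (fst p) (snd p)"
  by (simp add: chain_step_def)

lemma swap_pos_swap_pos [simp]: "swap_pos (swap_pos w s t) s t = w"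
  by (auto simp: swap_pos_def fun_eq_iff Transposition.transpose_def)

lemma chains_snoc:
  assumes ps: "ps \<in> chains k u" and st: "1 \<le> s" "s < t" "t \<le> k"
    and len: "inv_len k (swap_pos u s t) = inv_len k u + 1"
  shows "ps @ [(s, t)] \<in> chains k (swap_pos u s t)"
proof -
  have last_u: "chain_step ps (length ps) = u" and steps:
    "\<forall>j < length ps. inv_len k (chain_step ps (Suc j)) = inv_len k (chain_step ps j) + 1"
    using ps by (auto simp: chains_def)
  have "inv_len k (chain_step (ps @ [(s, t)]) (Suc j)) = inv_len k (chain_step (ps @ [(s, t)]) j) + 1"
    if "j < Suc (length ps)" for j
  proof (cases "j < length ps")
    case True
    then show ?thesis using steps by (simp add: chain_step_append)
  next
    case False
    then have "j = length ps" using that by auto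
    then show ?thesis using len last_u by (simp add: chain_step_snoc_length chain_step_append)
  qed
  moreover have "chain_step (ps @ [(s, t)]) (Suc (length ps)) = swap_pos u s t"
    using last_u by (simp add: chain_step_snoc_length)
  ultimately show ?thesis
    using ps st len by (auto simp: chains_def)
qed

lemma chain_through_inversions:
  assumes "w permutes {1..k}"
  shows "\<exists>ps\<in>chains k w. distinct ps \<and> set ps = inversions k w"
  using assms
proof (induction "inv_len k w" arbitrary: w)
  case 0
  then have no_inv: "inversions k w = {}"
    using finite_inversions by (simp add: inv_len_eq_card_inversions)
  then have "w = id" using permutes_without_inversions_eq_id 0 by blast
  then show ?case
    using 0(1) no_inv by (intro bexI[of _ "[]"]) (auto simp: chains_def chain_step_def id_def)
next
  case (Suc L)
  then have "inversions k w \<noteq> {}" by (auto simp: inv_len_eq_card_inversions)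
  then obtain s t where st: "(s, t) \<in> inversions k w" "w s = Suc (w t)"
    using adjacent_values_inversion_exists[OF Suc.prems] by (metis ex_in_conv surj_pair)
  define u where "u = swap_pos w s t"
  have w_eq: "w = swap_pos u s t" by (simp add: u_def)
  have inv_w: "inversions k w = insert (s, t) (inversions k u)" "(s, t) \<notin> inversions k u"
    using inversions_swap_pos_adjacent_values[OF Suc.prems st] by (simp_all add: u_def)
  have st': "1 \<le> s" "s < t" "t \<le> k" using st by (auto simp: inversions_def)
  have u: "u permutes {1..k}"
    unfolding u_def swap_pos_def using Suc.prems st' by (intro permutes_compose permutes_swap_id) auto
  have len: "inv_len k w = inv_len k u + 1"
    using inv_w finite_inversions by (simp add: inv_len_eq_card_inversions)
  obtain ps where ps: "ps \<in> chains k u" "distinct ps" "set ps = inversions k u"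
    using Suc.hyps(1)[of u] Suc.hyps(2) len u by auto
  have "ps @ [(s, t)] \<in> chains k w"
    using chains_snoc[OF ps(1) st'] len by (simp add: w_eq)
  then show ?case using ps inv_w by (intro bexI[of _ "ps @ [(s, t)]"]) auto
qed

section \<open>Monomials of R_w from labelled inversions\<close>

lemma finite_chains: "finite (chains k w)"
proof -
  have "chains k w \<subseteq> {ps. set ps \<subseteq> {1..k} \<times> {1..k} \<and> length ps = inv_len k w}"
    unfolding chains_def by auto
  then show ?thesis by (rule finite_subset) (intro finite_lists_length_eq, auto)
qed

text \<open>No cancellation can occur between chains, so the chain through the inversions suffices.\<close>
lemma coeff_R_poly_ge_one:
  assumes w: "w permutes {1..k}"
    and \<sigma>: "\<forall>p\<in>inversions k w. fst p \<le> \<sigma> p \<and> \<sigma> p < snd p"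
  shows "coeff_v (R_poly k w) (\<Sum>p\<in>inversions k w. Poly_Mapping.single (\<sigma> p) 1) \<ge> 1"
proof -
  obtain ps where ps: "ps \<in> chains k w" "distinct ps" "set ps = inversions k w"
    using chain_through_inversions[OF w] by blast
  have "1 \<le> Poly_Mapping.lookup (prod_list (map cover_weight ps)) (\<Sum>p\<leftarrow>ps. Poly_Mapping.single (\<sigma> p) 1)"
    using lookup_prod_cover_weights_ge_one[of ps \<sigma>] \<sigma> ps(3) by simp
  also have "(\<Sum>p\<leftarrow>ps. Poly_Mapping.single (\<sigma> p) 1) = (\<Sum>p\<in>inversions k w. Poly_Mapping.single (\<sigma> p) 1)"
    using ps by (simp add: sum_list_distinct_conv_sum_set)
  also have "Poly_Mapping.lookup (prod_list (map cover_weight ps)) (\<Sum>p\<in>inversions k w. Poly_Mapping.single (\<sigma> p) 1)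
     \<le> (\<Sum>qs\<in>chains k w. Poly_Mapping.lookup (prod_list (map cover_weight qs)) (\<Sum>p\<in>inversions k w. Poly_Mapping.single (\<sigma> p) 1))"
    using ps(1) finite_chains nonneg_coeffs_prod_cover_weights
    by (intro member_le_sum) (auto simp: nonneg_coeffs_def)
  finally show ?thesis unfolding coeff_v_def R_poly_def by (simp add: lookup_sum)
qed

lemma lookup_sum_single_one:
  assumes "finite A"
  shows "Poly_Mapping.lookup (\<Sum>p\<in>A. Poly_Mapping.single (\<sigma> p) (1::nat)) i = card {p\<in>A. \<sigma> p = i}"
proof -
  have "Poly_Mapping.lookup (\<Sum>p\<in>A. Poly_Mapping.single (\<sigma> p) (1::nat)) i = (\<Sum>p\<in>A. if \<sigma> p = i then 1 else 0)"
    unfolding lookup_sum by (intro sum.cong) (auto simp: lookup_single when_def)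
  also have "\<dots> = card {p\<in>A. \<sigma> p = i}"
    using assms by (simp add: sum.If_cases Int_def conj_commute)
  finally show ?thesis .
qed

lemma exp_seq_sum_single_one:
  fixes \<sigma> :: "'a \<Rightarrow> nat"
  assumes "finite A" "\<forall>p\<in>A. \<sigma> p \<in> {1..k-1}"
  shows "exp_seq k (\<Sum>p\<in>A. Poly_Mapping.single (\<sigma> p) (1::nat))"
  unfolding exp_seq_def
proof
  fix i assume "i \<in> Poly_Mapping.keys (\<Sum>p\<in>A. Poly_Mapping.single (\<sigma> p) (1::nat))"
  then have "{p\<in>A. \<sigma> p = i} \<noteq> {}"
    unfolding in_keys_iff lookup_sum_single_one[OF assms(1)] by (metis card.empty)
  then show "i \<in> {1..k-1}" using assms by auto
qed

lemma sum_lookup_sum_single_one: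
  fixes \<sigma> :: "'a \<Rightarrow> nat"
  assumes "finite A" "\<forall>p\<in>A. \<sigma> p \<in> {1..k-1}"
  shows "(\<Sum>i\<in>{1..k-1}. Poly_Mapping.lookup (\<Sum>p\<in>A. Poly_Mapping.single (\<sigma> p) (1::nat)) i) = card A"
proof -
  have "(\<Sum>i\<in>{1..k-1}. Poly_Mapping.lookup (\<Sum>p\<in>A. Poly_Mapping.single (\<sigma> p) (1::nat)) i)
      = (\<Sum>p\<in>A. \<Sum>i\<in>{1..k-1}. if \<sigma> p = i then 1 else 0)"
    unfolding lookup_sum by (subst sum.swap) (auto simp: lookup_single when_def intro!: sum.cong)
  also have "\<dots> = (\<Sum>p\<in>A. 1)"
    using assms(2) by (intro sum.cong) (auto simp: sum.delta')
  finally show ?thesis by simp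
qed

lemma coeff_R_poly_nonzero_if_labelled:
  assumes w: "w permutes {1..k}"
    and \<sigma>: "\<forall>p\<in>inversions k w. fst p \<le> \<sigma> p \<and> \<sigma> p < snd p"
    and b: "b = (\<Sum>p\<in>inversions k w. Poly_Mapping.single (\<sigma> p) 1)"
  shows "exp_seq k b \<and> (\<Sum>i\<in>{1..k-1}. Poly_Mapping.lookup b i) = inv_len k w \<and> coeff_v (R_poly k w) b \<noteq> 0"
proof -
  have range: "\<forall>p\<in>inversions k w. \<sigma> p \<in> {1..k-1}"
    using \<sigma> by (fastforce simp: inversions_def)
  show ?thesis
    using exp_seq_sum_single_one[OF finite_inversions range]
      sum_lookup_sum_single_one[OF finite_inversions range] coeff_R_poly_ge_one[OF w \<sigma>]
    by (simp add: b inv_len_eq_card_inversions)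
qed

lemma R_poly_has_nonzero_coeff_of_length:
  assumes "w permutes {1..k}"
  shows "\<exists>b. exp_seq k b \<and> (\<Sum>i\<in>{1..k-1}. Poly_Mapping.lookup b i) = inv_len k w
             \<and> coeff_v (R_poly k w) b \<noteq> 0"
  using coeff_R_poly_nonzero_if_labelled[OF assms, of fst] by (auto simp: inversions_def)

section \<open>Cheapest matchings\<close>

definition split_closed :: "(nat \<times> nat) set \<Rightarrow> bool" where
  "split_closed S \<longleftrightarrow> (\<forall>a l m. (a, l) \<in> S \<longrightarrow> a \<le> m \<longrightarrow> m < l \<longrightarrow> (a, m) \<in> S \<or> (Suc m, l) \<in> S)"

definition covering_matching :: "nat \<Rightarrow> (nat \<Rightarrow>\<^sub>0 nat) \<Rightarrow> (nat \<times> nat \<Rightarrow> nat \<times> nat) \<Rightarrow> bool" where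
  "covering_matching k b f \<longleftrightarrow> inj_on f (lower_B k b) \<and> f ` lower_B k b \<subseteq> upper_B k
      \<and> (\<forall>d\<in>lower_B k b. fst (f d) \<le> fst d \<and> fst d \<le> snd (f d))"

definition matching_cost :: "nat \<Rightarrow> (nat \<Rightarrow>\<^sub>0 nat) \<Rightarrow> (nat \<times> nat \<Rightarrow> nat \<times> nat) \<Rightarrow> nat" where
  "matching_cost k b f = (\<Sum>d\<in>lower_B k b. snd (f d) - fst (f d))"

lemma finite_lower_B: "finite (lower_B k b)"
proof -
  have "lower_B k b = Sigma {1..k-1} (\<lambda>i. {1..Poly_Mapping.lookup b i})"
    unfolding lower_B_def by auto
  then show ?thesis by auto
qed

lemma covering_matching_fun_upd:
  assumes f: "covering_matching k b f" and d: "d \<in> lower_B k b"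
    and new: "new \<notin> f ` lower_B k b" "new \<in> upper_B k" "fst new \<le> fst d" "fst d \<le> snd new"
  shows "covering_matching k b (f(d := new))"
proof -
  have "inj_on (f(d := new)) (lower_B k b - {d})"
    using f new(1) by (intro inj_on_fun_updI) (auto simp: covering_matching_def inj_on_diff)
  moreover have "new \<notin> (f(d := new)) ` (lower_B k b - {d})"
    using new(1) by auto
  ultimately have "inj_on (f(d := new)) (lower_B k b)"
    using inj_on_insert[of "f(d := new)" d "lower_B k b - {d}"] d by (simp add: insert_absorb)
  then show ?thesis using f new(2-) unfolding covering_matching_def by auto
qed

text \<open>Otherwise the lower vertex matched to \<open>[a, l]\<close> could be rematched to the half
  containing it, shortening the matching.\<close>
lemma cheapest_covering_matching_split_closed:
  assumes f: "covering_matching k b f"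
    and cheapest: "\<And>f'. covering_matching k b f' \<Longrightarrow> matching_cost k b f \<le> matching_cost k b f'"
  shows "split_closed (f ` lower_B k b)"
  unfolding split_closed_def
proof (intro allI impI, rule ccontr)
  fix a l m
  assume al: "(a, l) \<in> f ` lower_B k b" and m: "a \<le> m" "m < l"
    and unused: "\<not> ((a, m) \<in> f ` lower_B k b \<or> (Suc m, l) \<in> f ` lower_B k b)"
  obtain d where d: "d \<in> lower_B k b" "f d = (a, l)" using al by (metis imageE)
  have "f d \<in> upper_B k" "fst (f d) \<le> fst d" "fst d \<le> snd (f d)"
    using f d(1) unfolding covering_matching_def by auto
  then have bounds: "1 \<le> a" "l \<le> k - 1" "a \<le> fst d" "fst d \<le> l"
    using d(2) by (auto simp: upper_B_def)
  define new where "new = (if fst d \<le> m then (a, m) else (Suc m, l))"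
  have "new \<notin> f ` lower_B k b" "new \<in> upper_B k" "fst new \<le> fst d" "fst d \<le> snd new"
    using unused bounds m by (simp_all add: new_def upper_B_def)
  then have "covering_matching k b (f(d := new))"
    by (rule covering_matching_fun_upd[OF f d(1)])
  moreover have "matching_cost k b (f(d := new)) < matching_cost k b f"
    unfolding matching_cost_def
  proof (rule sum_strict_mono_ex1[OF finite_lower_B])
    show "\<forall>x\<in>lower_B k b. snd ((f(d := new)) x) - fst ((f(d := new)) x) \<le> snd (f x) - fst (f x)"
      using d m by (auto simp: new_def)
    show "\<exists>x\<in>lower_B k b. snd ((f(d := new)) x) - fst ((f(d := new)) x) < snd (f x) - fst (f x)"
      using d bounds m by (intro bexI[of _ d]) (auto simp: new_def)
  qed
  ultimately show False using cheapest by (simp add: leD)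
qed

lemma split_closed_covering_matching_exists:
  assumes "matching_seq k b"
  obtains f where "covering_matching k b f" "split_closed (f ` lower_B k b)"
proof -
  obtain f0 where "covering_matching k b f0"
    using assms unfolding matching_seq_def covering_matching_def by blast
  then obtain f where f: "covering_matching k b f"
    and cheapest: "\<forall>f'. covering_matching k b f' \<longrightarrow> matching_cost k b f \<le> matching_cost k b f'"
    using ex_has_least_nat[of "covering_matching k b" f0 "matching_cost k b"] by blast
  have "split_closed (f ` lower_B k b)"
    using cheapest by (intro cheapest_covering_matching_split_closed[OF f]) auto
  with f show ?thesis by (rule that)
qed

section \<open>Realizing split-closed sets of intervals\<close>

definition extend_last :: "nat \<Rightarrow> (nat \<Rightarrow> nat) \<Rightarrow> nat \<Rightarrow> nat \<Rightarrow> nat" where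
  "extend_last n w M t =
     (if 1 \<le> t \<and> t \<le> n then (if M \<le> w t then Suc (w t) else w t) else if t = Suc n then M else t)"

definition top_positions :: "nat \<Rightarrow> (nat \<Rightarrow> nat) \<Rightarrow> nat \<Rightarrow> nat set" where
  "top_positions n w q = {t. 1 \<le> t \<and> t \<le> n \<and> n - q < w t}"

lemma top_positions_subset: "top_positions n w q \<subseteq> {1..n}"
  by (auto simp: top_positions_def)

lemma finite_top_positions: "finite (top_positions n w q)"
  by (rule finite_subset[OF top_positions_subset]) simp

lemma card_top_positions:
  assumes w: "w permutes {1..n}" and q: "q \<le> n"
  shows "card (top_positions n w q) = q"
proof -
  have image: "w ` top_positions n w q = {n - q<..n}"
  proof
    show "w ` top_positions n w q \<subseteq> {n - q<..n}"
      using permutes_in_image[OF w] by (fastforce simp: top_positions_def)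
    show "{n - q<..n} \<subseteq> w ` top_positions n w q"
    proof
      fix y assume y: "y \<in> {n - q<..n}"
      then have "y \<in> w ` {1..n}" unfolding permutes_image[OF w] by simp
      then obtain t where "t \<in> {1..n}" "w t = y" by (metis imageE)
      then show "y \<in> w ` top_positions n w q" using y by (force simp: top_positions_def)
    qed
  qed
  have "inj_on w (top_positions n w q)"
    using permutes_inj[OF w] by (auto intro: inj_on_subset)
  then have "card (top_positions n w q) = card {n - q<..n}"
    by (metis card_image image)
  then show ?thesis using q by simp
qed

lemma extend_last_permutes:
  assumes w: "w permutes {1..n}" and M: "1 \<le> M" "M \<le> Suc n"
  shows "extend_last n w M permutes {1..Suc n}"
proof (rule inj_imp_permutes)
  have w_range: "1 \<le> w t \<and> w t \<le> n" if "1 \<le> t" "t \<le> n" for t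
    using permutes_in_image[OF w, of t] that by simp
  show "inj_on (extend_last n w M) {1..Suc n}"
  proof (rule inj_onI)
    fix x y assume "x \<in> {1..Suc n}" "y \<in> {1..Suc n}" and eq: "extend_last n w M x = extend_last n w M y"
    then consider "x \<le> n" "y \<le> n" | "x = Suc n" "y \<le> n" | "x \<le> n" "y = Suc n" | "x = Suc n" "y = Suc n"
      by fastforce
    then show "x = y"
    proof cases
      case 1
      then have "w x = w y" using eq \<open>x \<in> _\<close> \<open>y \<in> _\<close> by (auto simp: extend_last_def split: if_splits)
      then show ?thesis using permutes_inj[OF w] by (simp add: inj_eq)
    qed (use eq \<open>x \<in> _\<close> \<open>y \<in> _\<close> in \<open>auto simp: extend_last_def split: if_splits\<close>)
  qed
  show "extend_last n w M x \<in> {1..Suc n}" if "x \<in> {1..Suc n}" for x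
    using that M w_range[of x] by (auto simp: extend_last_def)
  show "extend_last n w M x = x" if "x \<notin> {1..Suc n}" for x
    using that by (auto simp: extend_last_def)
qed simp

lemma inversions_extend_last:
  assumes "p \<le> n"
  shows "inversions (Suc n) (extend_last n w (Suc n - p))
           = inversions n w \<union> (\<lambda>t. (t, Suc n)) ` top_positions n w p"
proof (rule set_eqI, clarify)
  fix i j
  show "(i, j) \<in> inversions (Suc n) (extend_last n w (Suc n - p))
          \<longleftrightarrow> (i, j) \<in> inversions n w \<union> (\<lambda>t. (t, Suc n)) ` top_positions n w p"
    using assms by (cases "j \<le> n") (auto simp: inversions_def extend_last_def top_positions_def)
qed

lemma top_positions_extend_last:
  assumes "q \<le> p" "p \<le> n"
  shows "top_positions n w q \<subseteq> top_positions (Suc n) (extend_last n w (Suc n - p)) q"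
  using assms by (auto simp: top_positions_def extend_last_def)

lemma top_positions_extend_last_Suc:
  "top_positions n w q \<subseteq> top_positions (Suc n) (extend_last n w M) (Suc q)"
  by (auto simp: top_positions_def extend_last_def)

lemma inj_on_fun_upd_insert_into:
  assumes "finite C" "x \<notin> C" "inj_on \<psi> C" "\<psi> ` C \<subseteq> T" "finite T" "card C < card T"
  obtains y where "y \<in> T" "inj_on (\<psi>(x := y)) (insert x C)" "\<psi>(x := y) ` insert x C \<subseteq> T"
proof -
  have "card (\<psi> ` C) < card T" using assms card_image_le le_less_trans by blast
  then have "\<not> T \<subseteq> \<psi> ` C"
    using card_mono[OF finite_imageI[OF assms(1)]] by (meson not_le)
  then obtain y where y: "y \<in> T" "y \<notin> \<psi> ` C" by blast
  have "inj_on (\<psi>(x := y)) (insert x C)"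
    using assms(2,3) y(2) by (auto simp: inj_on_def)
  moreover have "\<psi>(x := y) ` insert x C \<subseteq> T"
    using assms(2,4) y(1) by auto
  ultimately show ?thesis using y(1) that by blast
qed

lemma bij_betw_pair_const:
  assumes "bij_betw \<psi> C T"
  shows "bij_betw (\<lambda>x. (\<psi> (fst x), m')) ((\<lambda>j. (j, m)) ` C) ((\<lambda>t. (t, m')) ` T)"
proof -
  have "(\<lambda>x. (\<psi> (fst x), m')) ` (\<lambda>j. (j, m)) ` C = (\<lambda>t. (t, m')) ` T"
    using assms by (simp add: bij_betw_def image_image flip: image_image[of "\<lambda>t. (t, m')" \<psi>])
  then show ?thesis using assms by (auto simp: bij_betw_def inj_on_def)
qed

definition intervals_below :: "nat \<Rightarrow> (nat \<times> nat) set \<Rightarrow> (nat \<times> nat) set" where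
  "intervals_below n S = {x\<in>S. snd x < n}"

definition column :: "nat \<Rightarrow> (nat \<times> nat) set \<Rightarrow> nat set" where
  "column n S = {j. (j, n) \<in> S}"

definition admissible :: "nat \<Rightarrow> (nat \<times> nat) set \<Rightarrow> nat set \<Rightarrow> bool" where
  "admissible n S C \<longleftrightarrow> C \<subseteq> {1..n} \<and> (\<forall>a\<in>C. \<forall>m. a \<le> m \<longrightarrow> m < n \<longrightarrow> (a, m) \<in> S \<or> Suc m \<in> C)"

text \<open>The interval [j, l] is paired with an inversion (i', j') of w whose cover weight
  v_i' + ... + v_(j'-1) contains v_j + ... + v_l.\<close>
definition inversions_dominate :: "nat \<Rightarrow> (nat \<times> nat) set \<Rightarrow> (nat \<Rightarrow> nat) \<Rightarrow> bool" where
  "inversions_dominate n S w \<longleftrightarrow>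
     (\<exists>\<phi>. bij_betw \<phi> S (inversions n w) \<and> (\<forall>p\<in>S. fst (\<phi> p) \<le> fst p \<and> snd p < snd (\<phi> p)))"

text \<open>The invariant that makes the induction go through: appending the value Suc n - p makes the
  positions of the p largest values the new inversions (t, Suc n) (inversions_extend_last), and
  the intervals [j, n] of the next column must be paired with them by some t \<le> j.\<close>
definition top_matchable :: "nat \<Rightarrow> (nat \<times> nat) set \<Rightarrow> (nat \<Rightarrow> nat) \<Rightarrow> bool" where
  "top_matchable n S w \<longleftrightarrow> (\<forall>C. admissible n S C \<longrightarrow>
     (\<exists>\<psi>. inj_on \<psi> C \<and> \<psi> ` C \<subseteq> top_positions n w (card C) \<and> (\<forall>c\<in>C. \<psi> c \<le> c)))"

lemma intervals_below_subset_upper_B: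
  "S \<subseteq> upper_B (Suc n) \<Longrightarrow> intervals_below n S \<subseteq> upper_B n"
  by (auto simp: intervals_below_def upper_B_def)

lemma split_closed_intervals_below: "split_closed S \<Longrightarrow> split_closed (intervals_below n S)"
  unfolding split_closed_def intervals_below_def by fastforce

lemma column_subset: "S \<subseteq> upper_B (Suc n) \<Longrightarrow> column n S \<subseteq> {1..n}"
  by (auto simp: column_def upper_B_def)

lemma card_column_le:
  assumes "S \<subseteq> upper_B (Suc n)"
  shows "card (column n S) \<le> n"
  using card_mono[OF _ column_subset[OF assms]] by simp

lemma intervals_below_Un_column:
  assumes "S \<subseteq> upper_B (Suc n)"
  shows "S = intervals_below n S \<union> (\<lambda>j. (j, n)) ` column n S"
proof (rule set_eqI)
  fix x
  have "x \<in> S \<Longrightarrow> snd x \<le> n" using assms by (auto simp: upper_B_def)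
  then show "x \<in> S \<longleftrightarrow> x \<in> intervals_below n S \<union> (\<lambda>j. (j, n)) ` column n S"
    by (cases x) (auto simp: intervals_below_def column_def)
qed

lemma admissible_column:
  assumes "S \<subseteq> upper_B (Suc n)" "split_closed S"
  shows "admissible n (intervals_below n S) (column n S)"
  using assms unfolding admissible_def split_closed_def intervals_below_def column_def upper_B_def
  by fastforce

lemma finite_admissible: "admissible n S C \<Longrightarrow> finite C"
  using finite_subset[of C "{1..n}"] by (simp add: admissible_def)

lemma card_admissible_le: "admissible n S C \<Longrightarrow> card C \<le> n"
  using card_mono[of "{1..n}" C] by (simp add: admissible_def)

lemma admissible_remove_last:
  "admissible (Suc n) S C \<Longrightarrow> admissible n (intervals_below n S) (C - {Suc n})"
  unfolding admissible_def intervals_below_def by (auto simp: le_Suc_eq)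

lemma admissible_subset_column:
  assumes "admissible (Suc n) S C" "Suc n \<notin> C"
  shows "C \<subseteq> column n S"
proof
  fix a assume "a \<in> C"
  then have "a \<le> n" using assms unfolding admissible_def by (fastforce simp: le_Suc_eq)
  then show "a \<in> column n S"
    using assms \<open>a \<in> C\<close> unfolding admissible_def column_def by auto
qed

lemma inversions_dominate_extend_last:
  assumes S: "S \<subseteq> upper_B (Suc n)" and w: "w permutes {1..n}"
    and dom: "inversions_dominate n (intervals_below n S) w"
    and \<psi>: "inj_on \<psi> (column n S)" "\<psi> ` column n S \<subseteq> top_positions n w (card (column n S))"
      "\<forall>c\<in>column n S. \<psi> c \<le> c"
  defines "w' \<equiv> extend_last n w (Suc n - card (column n S))"
  shows "inversions_dominate (Suc n) S w'"
proof -
  define C where "C = column n S"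
  define T where "T = top_positions n w (card C)"
  have p: "card C \<le> n" using card_column_le[OF S] by (simp add: C_def)
  obtain \<phi>' where \<phi>': "bij_betw \<phi>' (intervals_below n S) (inversions n w)"
      "\<forall>x\<in>intervals_below n S. fst (\<phi>' x) \<le> fst x \<and> snd x < snd (\<phi>' x)"
    using dom unfolding inversions_dominate_def by blast
  define \<phi> where "\<phi> x = (if snd x < n then \<phi>' x else (\<psi> (fst x), Suc n))" for x
  have below: "bij_betw \<phi> (intervals_below n S) (inversions n w)"
    using \<phi>'(1) by (rule bij_betw_cong[THEN iffD1, rotated]) (simp add: \<phi>_def intervals_below_def)
  have "\<psi> ` C = T"
    using \<psi>(1,2) card_top_positions[OF w p] finite_top_positions
    by (intro card_subset_eq) (simp_all add: card_image C_def T_def)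
  then have "bij_betw (\<lambda>x. (\<psi> (fst x), Suc n)) ((\<lambda>j. (j, n)) ` C) ((\<lambda>t. (t, Suc n)) ` T)"
    using \<psi>(1) by (intro bij_betw_pair_const) (simp add: bij_betw_def C_def)
  then have last: "bij_betw \<phi> ((\<lambda>j. (j, n)) ` C) ((\<lambda>t. (t, Suc n)) ` T)"
    by (rule bij_betw_cong[THEN iffD1, rotated]) (auto simp: \<phi>_def)
  have "inversions n w \<inter> (\<lambda>t. (t, Suc n)) ` T = {}" by (auto simp: inversions_def)
  then have "bij_betw \<phi> S (inversions (Suc n) w')"
    using bij_betw_combine[OF below last] intervals_below_Un_column[OF S] inversions_extend_last[OF p]
    by (simp add: w'_def C_def T_def)
  moreover have "fst (\<phi> x) \<le> fst x \<and> snd x < snd (\<phi> x)" if "x \<in> S" for x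
  proof (cases "snd x < n")
    case True
    then have "x \<in> intervals_below n S" using that by (simp add: intervals_below_def)
    then show ?thesis using \<phi>'(2) True by (simp add: \<phi>_def)
  next
    case False
    then have "snd x = n" "fst x \<in> C" using that S by (auto simp: upper_B_def C_def column_def)
    then show ?thesis using \<psi>(3) by (simp add: \<phi>_def C_def)
  qed
  ultimately show ?thesis unfolding inversions_dominate_def by blast
qed

lemma top_matchable_extend_last:
  assumes S: "S \<subseteq> upper_B (Suc n)" and w: "w permutes {1..n}"
    and top: "top_matchable n (intervals_below n S) w"
  defines "w' \<equiv> extend_last n w (Suc n - card (column n S))"
  shows "top_matchable (Suc n) S w'"
  unfolding top_matchable_def
proof (intro allI impI)
  fix C assume C: "admissible (Suc n) S C"
  have p: "card (column n S) \<le> n" by (rule card_column_le[OF S])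
  have w': "w' permutes {1..Suc n}" unfolding w'_def using p by (intro extend_last_permutes[OF w]) auto
  show "\<exists>\<psi>. inj_on \<psi> C \<and> \<psi> ` C \<subseteq> top_positions (Suc n) w' (card C) \<and> (\<forall>c\<in>C. \<psi> c \<le> c)"
  proof (cases "Suc n \<in> C")
    case False
    then have "admissible n (intervals_below n S) C" using admissible_remove_last[OF C] by simp
    then obtain \<psi> where \<psi>: "inj_on \<psi> C" "\<psi> ` C \<subseteq> top_positions n w (card C)" "\<forall>c\<in>C. \<psi> c \<le> c"
      using top unfolding top_matchable_def by blast
    have "card C \<le> card (column n S)"
      using admissible_subset_column[OF C False] column_subset[OF S] by (intro card_mono) (auto intro: finite_subset)
    then have "top_positions n w (card C) \<subseteq> top_positions (Suc n) w' (card C)"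
      unfolding w'_def using p by (rule top_positions_extend_last)
    then show ?thesis using \<psi> by blast
  next
    case True
    define C0 where "C0 = C - {Suc n}"
    have C_eq: "C = insert (Suc n) C0" "Suc n \<notin> C0" "finite C0"
      using True finite_admissible[OF C] by (auto simp: C0_def)
    have "admissible n (intervals_below n S) C0" using admissible_remove_last[OF C] by (simp add: C0_def)
    then obtain \<psi>0 where \<psi>0: "inj_on \<psi>0 C0" "\<psi>0 ` C0 \<subseteq> top_positions n w (card C0)" "\<forall>c\<in>C0. \<psi>0 c \<le> c"
      using top unfolding top_matchable_def by blast
    have card_T: "card (top_positions (Suc n) w' (card C)) = card C"
      using card_top_positions[OF w' card_admissible_le[OF C]] .
    have "\<psi>0 ` C0 \<subseteq> top_positions (Suc n) w' (card C)"
      using \<psi>0(2) top_positions_extend_last_Suc[of n w "card C0"] C_eq by (auto simp: w'_def)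
    moreover have "card C0 < card (top_positions (Suc n) w' (card C))"
      using card_T C_eq by simp
    ultimately obtain y where y: "y \<in> top_positions (Suc n) w' (card C)" "inj_on (\<psi>0(Suc n := y)) C"
      "\<psi>0(Suc n := y) ` C \<subseteq> top_positions (Suc n) w' (card C)"
      using inj_on_fun_upd_insert_into[OF C_eq(3,2) \<psi>0(1) _ finite_top_positions]
      unfolding C_eq(1)[symmetric] by blast
    moreover have "\<forall>c\<in>C. (\<psi>0(Suc n := y)) c \<le> c" using y(1) \<psi>0(3) C_eq by (auto simp: top_positions_def)
    ultimately show ?thesis by blast
  qed
qed

lemma split_closed_realizable:
  assumes "S \<subseteq> upper_B n" "split_closed S"
  shows "\<exists>w. w permutes {1..n} \<and> inversions_dominate n S w \<and> top_matchable n S w"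
  using assms
proof (induction n arbitrary: S)
  case 0
  then have "S = {}" by (auto simp: upper_B_def)
  moreover have "C = {}" if "admissible 0 S C" for C using that by (auto simp: admissible_def)
  moreover have "inversions 0 id = {}" by (simp add: inversions_def)
  ultimately show ?case
    by (intro exI[of _ id]) (auto simp: permutes_id inversions_dominate_def top_matchable_def bij_betw_def simp del: id_apply)
next
  case (Suc n)
  obtain w where w: "w permutes {1..n}" "inversions_dominate n (intervals_below n S) w"
      "top_matchable n (intervals_below n S) w"
    using Suc.IH[OF intervals_below_subset_upper_B split_closed_intervals_below] Suc.prems by blast
  obtain \<psi> where \<psi>: "inj_on \<psi> (column n S)" "\<psi> ` column n S \<subseteq> top_positions n w (card (column n S))"
      "\<forall>c\<in>column n S. \<psi> c \<le> c"
    using w(3) admissible_column[OF Suc.prems] unfolding top_matchable_def by blast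
  have "extend_last n w (Suc n - card (column n S)) permutes {1..Suc n}"
    using card_column_le[OF Suc.prems(1)] by (intro extend_last_permutes[OF w(1)]) auto
  then show ?case
    using inversions_dominate_extend_last[OF Suc.prems(1) w(1,2) \<psi>]
      top_matchable_extend_last[OF Suc.prems(1) w(1,3)] by blast
qed

lemma sum_single_fst_lower_B:
  assumes "exp_seq k b"
  shows "(\<Sum>d\<in>lower_B k b. Poly_Mapping.single (fst d) (1::nat)) = b"
proof (rule poly_mapping_eqI)
  fix i
  have "card {d\<in>lower_B k b. fst d = i} = Poly_Mapping.lookup b i"
  proof (cases "i \<in> {1..k-1}")
    case True
    then have "{d\<in>lower_B k b. fst d = i} = (\<lambda>t. (i, t)) ` {1..Poly_Mapping.lookup b i}"
      unfolding lower_B_def by auto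
    then show ?thesis by (simp add: card_image inj_on_def)
  next
    case False
    then have "Poly_Mapping.lookup b i = 0"
      using assms unfolding exp_seq_def by (auto simp: in_keys_iff)
    moreover have "{d\<in>lower_B k b. fst d = i} = {}"
      using False unfolding lower_B_def by auto
    ultimately show ?thesis by (metis card.empty)
  qed
  then show "Poly_Mapping.lookup (\<Sum>d\<in>lower_B k b. Poly_Mapping.single (fst d) 1) i = Poly_Mapping.lookup b i"
    unfolding lookup_sum_single_one[OF finite_lower_B] .
qed

lemma R_poly_has_nonzero_coeff_of_matching_seq:
  assumes b: "exp_seq k b" "matching_seq k b"
  shows "\<exists>w. w permutes {1..k} \<and> inv_len k w = (\<Sum>i\<in>{1..k-1}. Poly_Mapping.lookup b i)
             \<and> coeff_v (R_poly k w) b \<noteq> 0"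
proof -
  define L where "L = lower_B k b"
  obtain f where f: "covering_matching k b f" "split_closed (f ` L)"
    using split_closed_covering_matching_exists[OF b(2)] unfolding L_def by blast
  have "f ` L \<subseteq> upper_B k" using f(1) by (simp add: covering_matching_def L_def)
  then obtain w where w: "w permutes {1..k}" "inversions_dominate k (f ` L) w"
    using split_closed_realizable f(2) by blast
  then obtain \<phi> where \<phi>: "bij_betw \<phi> (f ` L) (inversions k w)"
      "\<forall>p\<in>f ` L. fst (\<phi> p) \<le> fst p \<and> snd p < snd (\<phi> p)"
    unfolding inversions_dominate_def by blast
  define h where "h = \<phi> \<circ> f"
  have h: "bij_betw h L (inversions k w)"
    unfolding h_def using f(1) \<phi>(1) by (intro bij_betw_trans[OF inj_on_imp_bij_betw]) (simp_all add: covering_matching_def L_def)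
  define \<sigma> where "\<sigma> p = fst (inv_into L h p)" for p
  have \<sigma>_h: "\<sigma> (h d) = fst d" if "d \<in> L" for d
    using that h by (simp add: \<sigma>_def bij_betw_inv_into_left)
  have labelled: "\<forall>p\<in>inversions k w. fst p \<le> \<sigma> p \<and> \<sigma> p < snd p"
  proof
    fix p assume "p \<in> inversions k w"
    then obtain d where d: "d \<in> L" "p = h d"
      using bij_betw_imp_surj_on[OF h] by (metis imageE)
    have "fst (\<phi> (f d)) \<le> fst (f d)" "snd (f d) < snd (\<phi> (f d))"
      using \<phi>(2) d(1) by auto
    moreover have "fst (f d) \<le> fst d" "fst d \<le> snd (f d)"
      using f(1) d(1) by (auto simp: covering_matching_def L_def)
    ultimately show "fst p \<le> \<sigma> p \<and> \<sigma> p < snd p"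
      using \<sigma>_h[OF d(1)] d(2) by (simp add: h_def)
  qed
  have "(\<Sum>p\<in>inversions k w. Poly_Mapping.single (\<sigma> p) 1) = (\<Sum>d\<in>L. Poly_Mapping.single (\<sigma> (h d)) (1::nat))"
    using sum.reindex_bij_betw[OF h, of "\<lambda>p. Poly_Mapping.single (\<sigma> p) (1::nat)"] by simp
  also have "\<dots> = b"
    using \<sigma>_h sum_single_fst_lower_B[OF b(1)] by (simp add: L_def)
  finally show ?thesis
    using coeff_R_poly_nonzero_if_labelled[OF w(1) labelled] w(1) by auto
qed

theorem mainTheorem9:
  fixes k :: nat
  assumes "k \<ge> 2"
  shows "(\<forall>w. w permutes {1..k} \<longrightarrow>
            (\<exists>b. exp_seq k b \<and> (\<Sum>i\<in>{1..k-1}. Poly_Mapping.lookup b i) = inv_len k w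
                 \<and> coeff_v (R_poly k w) b \<noteq> 0))
       \<and> (\<forall>b. exp_seq k b \<and> matching_seq k b \<longrightarrow>
            (\<exists>w. w permutes {1..k} \<and> inv_len k w = (\<Sum>i\<in>{1..k-1}. Poly_Mapping.lookup b i)
                 \<and> coeff_v (R_poly k w) b \<noteq> 0))"
  using R_poly_has_nonzero_coeff_of_length R_poly_has_nonzero_coeff_of_matching_seq by blast

end
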